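(* Let $d\ge 2$ and $1\le r<d$. Let $h(x)=\mathrm{ReLU}(\Gamma^*W^*x+\beta^* )$ be a one-layer ReLU network, where $x\in\mathbb{R}^d$, $\Gamma^*\in\mathbb{R}^{d\times d}$ is diagonal, $\beta^*\in\mathbb{R}^d$, and $W^*\in\mathbb{R}^{d\times d}$ has rank $r$. Consider the four-layer network $$f(x)=\mathrm{ReLU}\Big(\Gamma_4W_4\,\mathrm{ReLU}\big(\Gamma_3W_3\,\mathrm{ReLU}(\Gamma_2W_2\,\mathrm{ReLU}(\Gamma_1W_1x+\beta_1)+\beta_2)+\beta_3\big)+\beta_4\Big),$$ with layer widths $d\to dr\to r\to dr\to d$. Concretely: - $W_1\in\mathbb{R}^{dr\times d}$, $W_2\in\mathbb{R}^{r\times dr}$, $W_3\in\mathbb{R}^{dr\times r}$, $W_4\in\mathbb{R}^{d\times dr}$ are random and frozen; - $\Gamma_1,\Gamma_2,\Gamma_3,\Gamma_4$ are diagonal of sizes $dr,r,dr,d$ respectively; - $\beta_1,\beta_2,\beta_3,\beta_4$ are vectors of the corresponding sizes; - the $\Gamma_i,\beta_i$ are tunable. Then, with probability $1$ over the draw of $W_1,\dots,W_4$, there exist $\Gamma_1,\dots,\Gamma_4,\beta_1,\dots,\beta_4$ such that $f(x)=h(x)$ for all $x\in\mathbb{R}^d$ with $\|x\|_2\le1$.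
   Context: $\mathrm{ReLU}(t)=\max(t,0)$ is applied entrywise. "Random" weight matrices have independent, identically distributed entries drawn from an arbitrary continuous and bounded distribution, independently across matrices. The diagonal matrices $\Gamma_i$ and vectors $\beta_i$ are the (tunable) scale and shift parameters of normalization layers. *)

theory Defs
  imports "HOL-Analysis.Analysis" "HOL-Probability.Probability"
begin

definition relu :: "real \<Rightarrow> real" where
  "relu t = max t 0"

definition vrelu :: "real^'n \<Rightarrow> real^'n" where
  "vrelu v = (\<chi> i. relu (v $ i))"

definition is_diag :: "real^'n^'n \<Rightarrow> bool" where
  "is_diag G \<longleftrightarrow> (\<forall>i j. i \<noteq> j \<longrightarrow> G $ i $ j = 0)"

definition layer :: "real^'m^'m \<Rightarrow> real^'n^'m \<Rightarrow> real^'m \<Rightarrow> real^'n \<Rightarrow> real^'m" where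
  "layer G W b x = vrelu ((G ** W) *v x + b)"

text \<open>Index type of all frozen random weights: entries of
  W1 (dr x d), W2 (r x dr), W3 (dr x r), W4 (d x dr).\<close>
type_synonym ('d,'r) widx =
  "(('d \<times> 'r) \<times> 'd) + ('r \<times> ('d \<times> 'r)) + ((('d \<times> 'r) \<times> 'r) + ('d \<times> ('d \<times> 'r)))"

definition W1 :: "(('d::finite,'r::finite) widx \<Rightarrow> real) \<Rightarrow> real^'d^('d \<times> 'r)" where
  "W1 \<omega> = (\<chi> i j. \<omega> (Inl (i, j)))"
definition W2 :: "(('d::finite,'r::finite) widx \<Rightarrow> real) \<Rightarrow> real^('d \<times> 'r)^'r" where
  "W2 \<omega> = (\<chi> i j. \<omega> (Inr (Inl (i, j))))"
definition W3 :: "(('d::finite,'r::finite) widx \<Rightarrow> real) \<Rightarrow> real^'r^('d \<times> 'r)" where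
  "W3 \<omega> = (\<chi> i j. \<omega> (Inr (Inr (Inl (i, j)))))"
definition W4 :: "(('d::finite,'r::finite) widx \<Rightarrow> real) \<Rightarrow> real^('d \<times> 'r)^'d" where
  "W4 \<omega> = (\<chi> i j. \<omega> (Inr (Inr (Inr (i, j)))))"

definition cont_bounded_distr :: "real measure \<Rightarrow> bool" where
  "cont_bounded_distr \<mu> \<longleftrightarrow> prob_space \<mu> \<and> sets \<mu> = sets borel \<and>
     absolutely_continuous lborel \<mu> \<and> (\<exists>B. AE t in \<mu>. \<bar>t\<bar> \<le> B)"

end

theory Submission
  imports Defs
begin

text \<open>
  Factor \<open>W\<^sup>* = A B\<close> through \<open>\<real>\<^sup>r\<close>. The products \<open>W\<^sub>2 \<Gamma>\<^sub>1 W\<^sub>1\<close> and \<open>W\<^sub>4 \<Gamma>\<^sub>3 W\<^sub>3\<close> depend linearly on the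
  \<open>dr\<close> diagonal entries of \<open>\<Gamma>\<^sub>1\<close>, \<open>\<Gamma>\<^sub>3\<close>, and have exactly \<open>dr\<close> entries each, so they can be made equal
  to \<open>B\<close> and \<open>\<Gamma>\<^sup>* A\<close> as soon as the two \<open>dr \<times> dr\<close> coefficient matrices are invertible. Large
  biases keep the first three ReLUs in their linear regime on the (bounded) unit ball, and
  the last bias is chosen so that the final pre-activation equals \<open>\<Gamma>\<^sup>*W\<^sup>*x + \<beta>\<^sup>*\<close>.

  The product of the two determinants is a polynomial in each weight separately and is
  nonzero at a 0/1 choice of weights. By Fubini and induction on the number of weights,
  its zero set is null for any product of atomless distributions: in each coordinate only
  the finitely many roots of a nonzero polynomial are excluded.
\<close>

definition diag_mat :: "real^'n \<Rightarrow> real^'n^'n" where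
  "diag_mat g = (\<chi> i j. if i = j then g $ i else 0)"

lemma is_diag_diag_mat: "is_diag (diag_mat g)"
  by (simp add: is_diag_def diag_mat_def)

lemma is_diag_mat_1: "is_diag (mat 1)"
  by (simp add: is_diag_def mat_def)

lemma diag_mat_mult_nth: "(diag_mat g ** V) $ k $ j = g $ k * V $ k $ j"
  by (simp add: diag_mat_def matrix_matrix_mult_def if_distrib[of "\<lambda>c. c * _"] cong: if_cong)

lemma rank_factorization:
  fixes W :: "real^'n^'m"
  assumes "rank W = CARD('r::finite)"
  obtains A :: "real^'r^'m" and B :: "real^'n^'r" where "W = A ** B"
proof -
  have "dim (UNIV :: (real^'r) set) = dim (range ((*v) W))"
    using assms by (simp add: rank_dim_range)
  moreover have "subspace (range ((*v) W))"
    by (simp add: linear_subspace_image)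
  ultimately obtain f :: "real^'r \<Rightarrow> real^'m" where f: "linear f" "range f = range ((*v) W)"
    using subspace_isomorphism[OF subspace_UNIV] by blast
  then obtain g :: "real^'m \<Rightarrow> real^'r" where g: "linear g" "\<And>v. v \<in> range f \<Longrightarrow> f (g v) = v"
    using linear_exists_right_inverse_on[OF f(1) subspace_UNIV] by blast
  have gW: "linear (\<lambda>x. g (W *v x))"
    using g(1) by (intro linear_compose[unfolded o_def, OF matrix_vector_mul_linear])
  have "W = matrix f ** matrix (\<lambda>x. g (W *v x))"
  proof (subst matrix_eq, intro allI)
    fix x
    have "f (g (W *v x)) = W *v x" using f(2) g(2) by auto
    then show "W *v x = (matrix f ** matrix (\<lambda>x. g (W *v x))) *v x"
      by (simp add: matrix_vector_mul_assoc[symmetric] matrix_vector_mul(2)[OF f(1)]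
           matrix_vector_mul(2)[OF gW])
  qed
  then show ?thesis by (rule that)
qed

definition sandwich_coeffs ::
    "real^'k^'a \<Rightarrow> real^'b^'k \<Rightarrow> ('p \<Rightarrow> 'a) \<Rightarrow> ('p \<Rightarrow> 'b) \<Rightarrow> real^'p^'k" where
  "sandwich_coeffs U V ia ib = (\<chi> k p. U $ ia p $ k * V $ k $ ib p)"

lemma diag_sandwich_nth:
  "(U ** (diag_mat g ** V)) $ ia p $ ib p = (g v* sandwich_coeffs U V ia ib) $ p"
  by (simp add: matrix_matrix_mult_def[of U] vector_matrix_mult_def sandwich_coeffs_def
      diag_mat_mult_nth mult_ac)

lemma diag_sandwich_solvable:
  fixes U :: "real^'k^'a" and V :: "real^'b^'k" and C :: "real^'b^'a"
    and ia :: "'k \<Rightarrow> 'a" and ib :: "'k \<Rightarrow> 'b"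
  assumes "det (sandwich_coeffs U V ia ib) \<noteq> 0"
    and "\<And>a b. \<exists>p. ia p = a \<and> ib p = b"
  obtains g where "U ** (diag_mat g ** V) = C"
proof -
  obtain M' where M': "M' ** sandwich_coeffs U V ia ib = mat 1"
    using assms(1) invertible_det_nz unfolding invertible_def by blast
  define g where "g = (\<chi> p. C $ ia p $ ib p) v* M'"
  have "U ** (diag_mat g ** V) = C"
  proof (intro iffD2[OF vec_eq_iff] allI)
    fix a b
    obtain p where p: "ia p = a" "ib p = b" using assms(2) by blast
    show "(U ** (diag_mat g ** V)) $ a $ b = C $ a $ b"
      using diag_sandwich_nth[of U g V ia p ib]
      by (simp add: g_def vector_matrix_mul_assoc M' p)
  qed
  then show ?thesis by (rule that)
qed

lemma bounded_affine_image:
  fixes M :: "real^'n^'m"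
  assumes "bounded S"
  shows "bounded ((\<lambda>x. M *v x + b) ` S)"
  using bounded_translation[OF bounded_linear_image[OF assms matrix_vector_mul_bounded_linear], of b]
  by (simp add: image_image add.commute)

lemma vrelu_eq_self: "(\<And>k. 0 \<le> v $ k) \<Longrightarrow> vrelu v = v"
  by (simp add: vrelu_def relu_def vec_eq_iff max_absorb1)

lemma layer_affine_on_bounded:
  fixes G :: "real^'m^'m" and W :: "real^'n^'m"
  assumes "bounded S"
  obtains b where "\<And>x. x \<in> S \<Longrightarrow> layer G W b x = (G ** W) *v x + b"
proof -
  have "bounded ((*v) (G ** W) ` S)"
    using bounded_linear_image[OF assms matrix_vector_mul_bounded_linear] .
  then obtain B where B: "\<And>x. x \<in> S \<Longrightarrow> norm ((G ** W) *v x) \<le> B"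
    by (auto simp: bounded_iff)
  have "0 \<le> ((G ** W) *v x + (\<chi> k. B)) $ k" if "x \<in> S" for x k
    using component_le_norm_cart[of "(G ** W) *v x" k] B[OF that] by simp
  then show ?thesis
    by (intro that[of "\<chi> k. B"]) (simp add: layer_def vrelu_eq_self)
qed

lemma four_layers_realize_layer:
  fixes W1 :: "real^'d^('d\<times>'r::finite)" and W2 :: "real^('d\<times>'r)^'r"
    and W3 :: "real^'r^('d\<times>'r)" and W4 :: "real^('d\<times>'r)^'d"
    and Gs Ws :: "real^'d^'d" and bs :: "real^'d" and S :: "(real^'d) set"
  assumes "det (sandwich_coeffs W2 W1 snd fst) \<noteq> 0"
    and "det (sandwich_coeffs W4 W3 fst snd) \<noteq> 0"
    and "rank Ws = CARD('r)"
    and "bounded S"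
  shows "\<exists>(G1 :: real^('d\<times>'r)^('d\<times>'r)) (G2 :: real^'r^'r) (G3 :: real^('d\<times>'r)^('d\<times>'r)) (G4 :: real^'d^'d)
       (b1 :: real^('d\<times>'r)) (b2 :: real^'r) (b3 :: real^('d\<times>'r)) (b4 :: real^'d).
       is_diag G1 \<and> is_diag G2 \<and> is_diag G3 \<and> is_diag G4 \<and>
       (\<forall>x\<in>S. layer G4 W4 b4 (layer G3 W3 b3 (layer G2 W2 b2 (layer G1 W1 b1 x)))
          = layer Gs Ws bs x)"
proof -
  obtain A :: "real^'r^'d" and B where Ws: "Ws = A ** B"
    using rank_factorization[OF assms(3)] .
  obtain g1 where g1: "W2 ** (diag_mat g1 ** W1) = B"
    using diag_sandwich_solvable[OF assms(1), where C=B] by (metis fst_conv snd_conv)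
  obtain g3 where g3: "W4 ** (diag_mat g3 ** W3) = Gs ** A"
    using diag_sandwich_solvable[OF assms(2), where C="Gs ** A"] by (metis fst_conv snd_conv)
  define G1 where "G1 = diag_mat g1"
  define G3 where "G3 = diag_mat g3"
  obtain b1 where l1: "\<And>x. x \<in> S \<Longrightarrow> layer G1 W1 b1 x = (G1 ** W1) *v x + b1"
    using layer_affine_on_bounded[OF assms(4), where G=G1 and W=W1] by blast
  define S1 where "S1 = (\<lambda>x. (G1 ** W1) *v x + b1) ` S"
  obtain b2 where l2: "\<And>y. y \<in> S1 \<Longrightarrow> layer (mat 1) W2 b2 y = W2 *v y + b2"
    using layer_affine_on_bounded[OF bounded_affine_image[OF assms(4)], where G="mat 1" and W=W2]
    unfolding S1_def matrix_mul_lid by blast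
  define S2 where "S2 = (\<lambda>y. W2 *v y + b2) ` S1"
  obtain b3 where l3: "\<And>y. y \<in> S2 \<Longrightarrow> layer G3 W3 b3 y = (G3 ** W3) *v y + b3"
    using layer_affine_on_bounded[OF bounded_affine_image[OF bounded_affine_image[OF assms(4)]],
        where G=G3 and W=W3]
    unfolding S2_def S1_def image_image by blast
  define b4 where "b4 = bs - (Gs ** A) *v (W2 *v b1 + b2) - W4 *v b3"
  have realize: "layer (mat 1) W4 b4 (layer G3 W3 b3 (layer (mat 1) W2 b2 (layer G1 W1 b1 x)))
      = layer Gs Ws bs x" if "x \<in> S" for x
  proof -
    let ?y = "W2 *v ((G1 ** W1) *v x + b1) + b2"
    have "W4 *v ((G3 ** W3) *v ?y + b3) + b4 = (W4 ** (G3 ** W3)) *v ?y + W4 *v b3 + b4"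
      by (simp add: matrix_vector_right_distrib matrix_vector_mul_assoc matrix_mul_assoc)
    also have "\<dots> = (Gs ** A) *v (W2 *v ((G1 ** W1) *v x)) + bs"
      by (simp add: G3_def g3 b4_def matrix_vector_right_distrib)
    also have "\<dots> = (Gs ** Ws) *v x + bs"
      by (simp add: G1_def Ws matrix_vector_mul_assoc matrix_mul_assoc flip: g1)
    finally show ?thesis
      using that by (simp add: l1 l2 l3 S1_def S2_def) (simp add: layer_def)
  qed
  have "is_diag G1" "is_diag G3"
    unfolding G1_def G3_def by (rule is_diag_diag_mat)+
  then show ?thesis
    by (intro exI[of _ G1] exI[of _ "mat 1"] exI[of _ G3] exI[of _ "mat 1"]
        exI[of _ b1] exI[of _ b2] exI[of _ b3] exI[of _ b4] conjI ballI is_diag_mat_1 realize)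
qed

lemma (in product_sigma_finite) null_sets_PiM_insert:
  assumes "finite I" "i \<notin> I" "S \<in> sets (PiM (insert i I) M)" "N \<in> null_sets (PiM I M)"
    and "\<And>x. x \<in> space (PiM I M) \<Longrightarrow> x \<notin> N \<Longrightarrow> AE y in M i. x(i := y) \<notin> S"
  shows "S \<in> null_sets (PiM (insert i I) M)"
proof -
  have "AE x in PiM I M. (\<integral>\<^sup>+ y. indicator S (x(i := y)) \<partial>M i) = 0"
  proof (rule AE_I'[OF assms(4)], safe)
    fix x assume x: "x \<in> space (PiM I M)"
      and nonzero: "(\<integral>\<^sup>+ y. indicator S (x(i := y)) \<partial>M i) \<noteq> 0"
    show "x \<in> N"
    proof (rule ccontr)
      assume "x \<notin> N"
      have "AE y in M i. indicator S (x(i := y)) = (0 :: ennreal)"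
        using assms(5)[OF x \<open>x \<notin> N\<close>] by eventually_elim simp
      then have "(\<integral>\<^sup>+ y. indicator S (x(i := y)) \<partial>M i) = (\<integral>\<^sup>+ y. 0 \<partial>M i)"
        by (rule nn_integral_cong_AE)
      with nonzero show False by simp
    qed
  qed
  then have "(\<integral>\<^sup>+ x. (\<integral>\<^sup>+ y. indicator S (x(i := y)) \<partial>M i) \<partial>PiM I M) = (\<integral>\<^sup>+ x. 0 \<partial>PiM I M)"
    by (rule nn_integral_cong_AE)
  moreover have "emeasure (PiM (insert i I) M) S
      = (\<integral>\<^sup>+ x. (\<integral>\<^sup>+ y. indicator S (x(i := y)) \<partial>M i) \<partial>PiM I M)"
    using product_nn_integral_insert[OF assms(1,2), of "indicator S"] assms(3)
    by simp
  ultimately show ?thesis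
    using assms(3) by (simp add: null_sets_def)
qed

definition coordinatewise_poly :: "(('i \<Rightarrow> real) \<Rightarrow> real) \<Rightarrow> bool" where
  "coordinatewise_poly f \<longleftrightarrow> (\<forall>x i. \<exists>p. \<forall>t. f (x(i := t)) = poly p t)"

lemma coordinatewise_poly_component: "coordinatewise_poly (\<lambda>x. x (e :: 'i))"
  unfolding coordinatewise_poly_def
proof (intro allI)
  fix x :: "'i \<Rightarrow> real" and i
  show "\<exists>p. \<forall>t. (x(i := t)) e = poly p t"
  proof (cases "i = e")
    case True
    then show ?thesis by (intro exI[of _ "[:0, 1 :: real:]"]) simp
  next
    case False
    then show ?thesis by (intro exI[of _ "[:x e:]"]) simp
  qed
qed

lemma coordinatewise_poly_mult:
  "coordinatewise_poly f \<Longrightarrow> coordinatewise_poly g \<Longrightarrow> coordinatewise_poly (\<lambda>x. f x * g x)"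
  unfolding coordinatewise_poly_def by (metis poly_mult)

lemma coordinatewise_poly_det:
  assumes "\<And>i j. coordinatewise_poly (f i j)"
  shows "coordinatewise_poly (\<lambda>x. det ((\<chi> i j. f i j x) :: real^'n::finite^'n))"
  unfolding coordinatewise_poly_def
proof (intro allI)
  fix x e
  have "\<forall>i j. \<exists>p. \<forall>t. f i j (x(e := t)) = poly p t"
    using assms unfolding coordinatewise_poly_def by blast
  then obtain q where q: "\<And>i j t. f i j (x(e := t)) = poly (q i j) t"
    by metis
  show "\<exists>p. \<forall>t. det ((\<chi> i j. f i j (x(e := t))) :: real^'n^'n) = poly p t"
    by (intro exI[of _ "\<Sum>\<sigma> | \<sigma> permutes UNIV. smult (of_int (sign \<sigma>)) (\<Prod>i\<in>UNIV. q i (\<sigma> i))"])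
       (simp add: det_def q poly_sum poly_prod)
qed

lemma coordinatewise_poly_fun_upd:
  assumes "coordinatewise_poly f"
  shows "coordinatewise_poly (\<lambda>x. f (x(i := c)))"
  unfolding coordinatewise_poly_def
proof (intro allI)
  fix x and j
  show "\<exists>p. \<forall>t. f ((x(j := t))(i := c)) = poly p t"
  proof (cases "j = i")
    case True
    then show ?thesis by (intro exI[of _ "[:f (x(i := c)):]"]) simp
  next
    case False
    then show ?thesis
      using assms unfolding coordinatewise_poly_def by (simp add: fun_upd_twist[OF False])
  qed
qed

lemma borel_measurable_det:
  assumes "\<And>i j. f i j \<in> borel_measurable M"
  shows "(\<lambda>x. det ((\<chi> i j. f i j x) :: real^'n::finite^'n)) \<in> borel_measurable M"
  unfolding det_def
  by (intro borel_measurable_sum borel_measurable_times borel_measurable_const borel_measurable_prod)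
     (simp add: assms)

lemma AE_poly_nonzero:
  fixes \<mu> :: "real measure" and p :: "real poly"
  assumes "\<And>R. finite R \<Longrightarrow> R \<in> null_sets \<mu>" and "p \<noteq> 0"
  shows "AE t in \<mu>. poly p t \<noteq> 0"
  by (rule AE_I'[OF assms(1)[OF poly_roots_finite[OF assms(2)]]]) blast

lemma null_sets_PiM_coordinatewise_poly_zeros:
  fixes \<mu> :: "real measure" and I :: "'i set"
  assumes \<mu>: "sigma_finite_measure \<mu>" "space \<mu> = UNIV" "\<And>R. finite R \<Longrightarrow> R \<in> null_sets \<mu>"
    and "finite I" "f \<in> borel_measurable (PiM I (\<lambda>_. \<mu>))" "coordinatewise_poly f"
    and "z \<in> space (PiM I (\<lambda>_. \<mu>))" "f z \<noteq> 0"
  shows "{x \<in> space (PiM I (\<lambda>_. \<mu>)). f x = 0} \<in> null_sets (PiM I (\<lambda>_. \<mu>))"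
  using assms(4-)
proof (induction I arbitrary: f z rule: finite_induct)
  case empty
  then have no_zeros: "{x \<in> space (PiM {} (\<lambda>_. \<mu>)). f x = 0} = {}"
    by (auto simp: space_PiM_empty)
  show ?case by (subst no_zeros) simp
next
  case (insert i I)
  interpret product_sigma_finite "\<lambda>_. \<mu>"
    using \<mu>(1) by (simp add: product_sigma_finite_def)
  let ?M = "PiM (insert i I) (\<lambda>_. \<mu>)" and ?N = "PiM I (\<lambda>_. \<mu>)"
  note f_meas[measurable] = insert.prems(1)
  define g where "g x = f (x(i := z i))" for x
  have "(\<lambda>x. x(i := z i)) \<in> measurable ?N ?M"
    by (rule measurable_fun_upd[where J=I]) (auto simp: \<mu>(2))
  then have "g \<in> borel_measurable ?N"
    unfolding g_def by measurable
  moreover have "coordinatewise_poly g"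
    unfolding g_def using insert.prems(2) by (rule coordinatewise_poly_fun_upd)
  moreover have "restrict z I \<in> space ?N"
    by (simp add: space_PiM \<mu>(2))
  moreover have "(restrict z I)(i := z i) = z"
    using insert.prems(3) insert.hyps(2) by (auto simp: fun_eq_iff space_PiM PiE_def extensional_def)
  then have "g (restrict z I) \<noteq> 0"
    using insert.prems(4) by (simp add: g_def)
  ultimately have null_g: "{x \<in> space ?N. g x = 0} \<in> null_sets ?N"
    by (rule insert.IH)
  show ?case
  proof (rule null_sets_PiM_insert[OF insert.hyps _ null_g])
    show "{x \<in> space ?M. f x = 0} \<in> sets ?M" by measurable
  next
    fix x assume "x \<in> space ?N" "x \<notin> {x \<in> space ?N. g x = 0}"
    then have "g x \<noteq> 0" by simp
    obtain p where p: "\<And>t. f (x(i := t)) = poly p t"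
      using insert.prems(2) unfolding coordinatewise_poly_def by blast
    with \<open>g x \<noteq> 0\<close> have "p \<noteq> 0"
      by (auto simp: g_def)
    have "AE y in \<mu>. poly p y \<noteq> 0"
      using \<mu>(3) \<open>p \<noteq> 0\<close> by (rule AE_poly_nonzero)
    then show "AE y in \<mu>. x(i := y) \<notin> {x \<in> space ?M. f x = 0}"
      by eventually_elim (simp add: p)
  qed
qed

lemma AE_PiM_coordinatewise_poly_nonzero:
  fixes \<mu> :: "real measure" and I :: "'i set"
  assumes "cont_bounded_distr \<mu>" "finite I" "f \<in> borel_measurable (PiM I (\<lambda>_. \<mu>))"
    and "coordinatewise_poly f" "z \<in> space (PiM I (\<lambda>_. \<mu>))" "f z \<noteq> 0"
  shows "AE x in PiM I (\<lambda>_. \<mu>). f x \<noteq> 0"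
proof -
  have prob: "prob_space \<mu>" and sets: "sets \<mu> = sets borel" and ac: "absolutely_continuous lborel \<mu>"
    using assms(1) by (auto simp: cont_bounded_distr_def)
  have sigma_finite: "sigma_finite_measure \<mu>"
    using prob by (rule prob_space_imp_sigma_finite)
  have space: "space \<mu> = UNIV"
    using sets_eq_imp_space_eq[OF sets] by simp
  have finite_null: "R \<in> null_sets \<mu>" if "finite R" for R
    using countable_imp_null_set_lborel[OF countable_finite[OF that]] ac
    by (auto simp: absolutely_continuous_def)
  show ?thesis
    using null_sets_PiM_coordinatewise_poly_zeros[where f = f, OF sigma_finite space finite_null assms(2-)]
    by (rule AE_I'[where P = "\<lambda>x. f x \<noteq> 0"]) auto
qed

lemma borel_measurable_PiM_component:
  assumes "sets \<mu> = sets borel" "i \<in> I"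
  shows "(\<lambda>\<omega>. \<omega> i) \<in> borel_measurable (PiM I (\<lambda>_. \<mu>))"
  using measurable_component_singleton[OF assms(2), of "\<lambda>_. \<mu>"]
    measurable_cong_sets[OF refl assms(1), of "PiM I (\<lambda>_. \<mu>)"]
  by simp

definition weights_det :: "(('d::finite, 'r::finite) widx \<Rightarrow> real) \<Rightarrow> real" where
  "weights_det \<omega> =
     det (sandwich_coeffs (W2 \<omega>) (W1 \<omega>) snd fst) * det (sandwich_coeffs (W4 \<omega>) (W3 \<omega>) fst snd)"

lemma weights_det_eq:
  "weights_det = (\<lambda>\<omega>.
     det (\<chi> k p. \<omega> (Inr (Inl (snd p, k))) * \<omega> (Inl (k, fst p))) *
     det (\<chi> k p. \<omega> (Inr (Inr (Inr (fst p, k)))) * \<omega> (Inr (Inr (Inl (k, snd p))))))"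
  by (simp add: fun_eq_iff weights_det_def sandwich_coeffs_def W1_def W2_def W3_def W4_def)

lemma borel_measurable_weights_det:
  assumes "sets \<mu> = sets borel"
  shows "weights_det \<in> borel_measurable (PiM UNIV (\<lambda>_. \<mu>))"
  unfolding weights_det_eq
  by (intro borel_measurable_times borel_measurable_det borel_measurable_PiM_component assms) simp_all

lemma coordinatewise_poly_weights_det: "coordinatewise_poly weights_det"
  unfolding weights_det_eq
  by (intro coordinatewise_poly_mult coordinatewise_poly_det coordinatewise_poly_component)

lemma weights_det_not_identically_zero:
  "\<exists>z :: ('d::finite, 'r::finite) widx \<Rightarrow> real. weights_det z \<noteq> 0"
proof
  \<comment> \<open>With \<open>W1 $ (i, a) $ j = [j = i]\<close>, \<open>W2 $ a' $ (i, a) = [a' = a]\<close> and W3, W4 alike,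
    both coefficient matrices are the identity.\<close>
  define z :: "('d, 'r) widx \<Rightarrow> real" where
    "z = case_sum (\<lambda>(k, j). if j = fst k then 1 else 0)
          (case_sum (\<lambda>(a, k). if a = snd k then 1 else 0)
            (case_sum (\<lambda>(k, j). if j = snd k then 1 else 0) (\<lambda>(i, k). if i = fst k then 1 else 0)))"
  have "sandwich_coeffs (W2 z) (W1 z) snd fst = mat 1" "sandwich_coeffs (W4 z) (W3 z) fst snd = mat 1"
    by (auto simp: vec_eq_iff mat_def sandwich_coeffs_def W1_def W2_def W3_def W4_def z_def prod_eq_iff)
  then show "weights_det z \<noteq> 0"
    by (simp add: weights_det_def)
qed

lemma AE_weights_det_nonzero:
  assumes "cont_bounded_distr \<mu>"
  shows "AE \<omega> in PiM (UNIV :: ('d::finite, 'r::finite) widx set) (\<lambda>_. \<mu>). weights_det \<omega> \<noteq> 0"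
proof -
  have sets: "sets \<mu> = sets borel"
    using assms by (simp add: cont_bounded_distr_def)
  obtain z :: "('d, 'r) widx \<Rightarrow> real" where "weights_det z \<noteq> 0"
    using weights_det_not_identically_zero by blast
  moreover have "z \<in> space (PiM UNIV (\<lambda>_. \<mu>))"
    using sets_eq_imp_space_eq[OF sets] by (simp add: space_PiM)
  ultimately show ?thesis
    using AE_PiM_coordinatewise_poly_nonzero[where f = weights_det and z = z, OF assms finite
        borel_measurable_weights_det[OF sets] coordinatewise_poly_weights_det]
    by blast
qed

theorem mainTheorem2:
  fixes \<mu> :: "real measure"
    and Gs :: "real^'d^'d" and Ws :: "real^'d^'d" and bs :: "real^'d"
    and r_ty :: "'r::finite itself"
  assumes "CARD('d) \<ge> 2"
    and "CARD('r) < CARD('d)"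
    and "is_diag Gs"
    and "rank Ws = CARD('r)"
    and "cont_bounded_distr \<mu>"
  shows "AE \<omega> in PiM (UNIV :: ('d,'r) widx set) (\<lambda>_. \<mu>).
     \<exists>(G1 :: real^('d\<times>'r)^('d\<times>'r)) (G2 :: real^'r^'r) (G3 :: real^('d\<times>'r)^('d\<times>'r)) (G4 :: real^'d^'d)
       (b1 :: real^('d\<times>'r)) (b2 :: real^'r) (b3 :: real^('d\<times>'r)) (b4 :: real^'d).
       is_diag G1 \<and> is_diag G2 \<and> is_diag G3 \<and> is_diag G4 \<and>
       (\<forall>x :: real^'d. norm x \<le> 1 \<longrightarrow>
          layer G4 (W4 \<omega>) b4 (layer G3 (W3 \<omega>) b3 (layer G2 (W2 \<omega>) b2 (layer G1 (W1 \<omega>) b1 x)))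
          = layer Gs Ws bs x)"
proof -
  have unit_ball: "bounded {x :: real^'d. norm x \<le> 1}"
    using bounded_cball[of "0 :: real^'d" 1] by (simp add: cball_def dist_norm)
  from AE_weights_det_nonzero[OF assms(5)] show ?thesis
  proof eventually_elim
    case (elim \<omega>)
    then have "det (sandwich_coeffs (W2 \<omega>) (W1 \<omega>) snd fst) \<noteq> 0"
      and "det (sandwich_coeffs (W4 \<omega>) (W3 \<omega>) fst snd) \<noteq> 0"
      by (simp_all add: weights_det_def)
    from four_layers_realize_layer[OF this assms(4) unit_ball] show ?case
      by simp
  qed
qed

end
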